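(* Every pairwise social choice correspondence that is strategyproof and strongly Condorcet-consistent satisfies Condorcet-stability (COS).
   Context: Let $A$ be a finite set of alternatives; a preference profile $R$ assigns a strict total order $\succ_i$ on $A$ to each voter $i$ of a finite non-empty electorate $N\subseteq\{1,2,\dots\}$; $\mathcal{R}^*(A)$ is the set of all profiles over all electorates. $g_R(x,y)=|\{i: x\succ_i y\}|-|\{i: y\succ_i x\}|$; $x\succsim_R y$ iff $g_R(x,y)\ge0$, with strict part $\succ_R$. A Condorcet winner is $x$ with $x\succ_R y$ for all $y\ne x$. An SCC is $f:\mathcal{R}^*(A)\to 2^A\setminus\{\emptyset\}$; it is pairwise if $f(R)=f(R')$ whenever $g_R=g_{R'}$. Fishburn's extension: for $X\ne Y$, $X\succ_i^F Y$ iff $x\succ_i y$ for all $x\in X\setminus Y,y\in Y$ and for all $x\in X,y\in Y\setminus X$. $f$ is strategyproof if no voter $i$ can change only his own preference to move from $R$ to $R'$ with $f(R')\succ_i^F f(R)$. $f$ is strongly Condorcet-consistent if $f(R)=\{x\}$ holds iff $x$ is the Condorcet winner in $R$. $f$ satisfies COS if for every profile $R$ there is no $x\in A$ with $f(R)\setminus\{x\}\ne\emptyset$ and $x\succ_R y$ for all $y\in f(R)\setminus\{x\}$. *)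

theory Defs
  imports Main
begin

text \<open>A profile is a pair (N, R) of an electorate
N (finite, nonempty, subset of the positive naturals) and an assignment R of a
strict total order (as a relation; (x,y) in R i means x is strictly preferred to y
by voter i) on A to each voter in N; voters outside N have the empty relation,
so that each profile has a canonical representation.\<close>

definition strict_total_order_on :: "'a set \<Rightarrow> 'a rel \<Rightarrow> bool" where
  "strict_total_order_on A r \<longleftrightarrow>
     r \<subseteq> A \<times> A \<and> irrefl r \<and> trans r \<and>
     (\<forall>x\<in>A. \<forall>y\<in>A. x \<noteq> y \<longrightarrow> (x, y) \<in> r \<or> (y, x) \<in> r)"

definition is_profile :: "'a set \<Rightarrow> nat set \<Rightarrow> (nat \<Rightarrow> 'a rel) \<Rightarrow> bool" where
  "is_profile A N R \<longleftrightarrow>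
     finite N \<and> N \<noteq> {} \<and> 0 \<notin> N \<and>
     (\<forall>i\<in>N. strict_total_order_on A (R i)) \<and> (\<forall>i. i \<notin> N \<longrightarrow> R i = {})"

definition margin :: "nat set \<Rightarrow> (nat \<Rightarrow> 'a rel) \<Rightarrow> 'a \<Rightarrow> 'a \<Rightarrow> int" where
  "margin N R x y = int (card {i\<in>N. (x, y) \<in> R i}) - int (card {i\<in>N. (y, x) \<in> R i})"

definition condorcet_winner :: "'a set \<Rightarrow> nat set \<Rightarrow> (nat \<Rightarrow> 'a rel) \<Rightarrow> 'a \<Rightarrow> bool" where
  "condorcet_winner A N R x \<longleftrightarrow> x \<in> A \<and> (\<forall>y\<in>A. y \<noteq> x \<longrightarrow> margin N R x y > 0)"

definition scc :: "'a set \<Rightarrow> (nat set \<Rightarrow> (nat \<Rightarrow> 'a rel) \<Rightarrow> 'a set) \<Rightarrow> bool" where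
  "scc A f \<longleftrightarrow> (\<forall>N R. is_profile A N R \<longrightarrow> f N R \<noteq> {} \<and> f N R \<subseteq> A)"

definition pairwise_scc :: "'a set \<Rightarrow> (nat set \<Rightarrow> (nat \<Rightarrow> 'a rel) \<Rightarrow> 'a set) \<Rightarrow> bool" where
  "pairwise_scc A f \<longleftrightarrow>
     (\<forall>N R N' R'. is_profile A N R \<longrightarrow> is_profile A N' R' \<longrightarrow>
        (\<forall>x y. margin N R x y = margin N' R' x y) \<longrightarrow> f N R = f N' R')"

definition fishburn :: "'a rel \<Rightarrow> 'a set \<Rightarrow> 'a set \<Rightarrow> bool" where
  "fishburn r X Y \<longleftrightarrow> X \<noteq> Y \<and>
     (\<forall>x\<in>X - Y. \<forall>y\<in>Y. (x, y) \<in> r) \<and> (\<forall>x\<in>X. \<forall>y\<in>Y - X. (x, y) \<in> r)"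

definition strategyproof :: "'a set \<Rightarrow> (nat set \<Rightarrow> (nat \<Rightarrow> 'a rel) \<Rightarrow> 'a set) \<Rightarrow> bool" where
  "strategyproof A f \<longleftrightarrow>
     (\<forall>N R R' i. is_profile A N R \<longrightarrow> is_profile A N R' \<longrightarrow> i \<in> N \<longrightarrow>
        (\<forall>j. j \<noteq> i \<longrightarrow> R' j = R j) \<longrightarrow> \<not> fishburn (R i) (f N R') (f N R))"

definition strongly_condorcet_consistent :: "'a set \<Rightarrow> (nat set \<Rightarrow> (nat \<Rightarrow> 'a rel) \<Rightarrow> 'a set) \<Rightarrow> bool" where
  "strongly_condorcet_consistent A f \<longleftrightarrow>
     (\<forall>N R. is_profile A N R \<longrightarrow> (\<forall>x. f N R = {x} \<longleftrightarrow> condorcet_winner A N R x))"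

definition COS :: "'a set \<Rightarrow> (nat set \<Rightarrow> (nat \<Rightarrow> 'a rel) \<Rightarrow> 'a set) \<Rightarrow> bool" where
  "COS A f \<longleftrightarrow>
     (\<forall>N R. is_profile A N R \<longrightarrow>
        \<not> (\<exists>x\<in>A. f N R - {x} \<noteq> {} \<and> (\<forall>y\<in>f N R - {x}. margin N R x y > 0)))"

end

theory Submission
  imports Defs
begin

text \<open>Suppose x beats every other member of f(R) in the majority relation, yet f(R) \<noteq> {x}.
By strong Condorcet-consistency x is not a Condorcet winner, so some z is not beaten by x, and
z \<notin> f(R). Add two voters with mutually inverse ballots headed by z; this changes no margin. Let
the first of them move z down below T = f(R) \<union> {x}: every margin of T against z grows by 2.
If the choice set changed from X to Y, the first voter, whose true ballot puts X - Y on top,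
could restore X by moving z back up, a manipulation in Fishburn's sense. So the choice set is
still f(R), x still beats the rest of it, and x is strictly closer to being a Condorcet winner.
Iterating this ends with x a Condorcet winner and the choice set {x}, a contradiction.\<close>

definition rank_order :: "'a set \<Rightarrow> ('a \<Rightarrow> nat) \<Rightarrow> ('a \<Rightarrow> nat) \<Rightarrow> 'a rel" where
  "rank_order A rk lvl =
     {(a, b). a \<in> A \<and> b \<in> A \<and> (lvl a < lvl b \<or> (lvl a = lvl b \<and> rk a < rk b))}"

lemma strict_total_order_on_rank_order:
  "inj_on rk A \<Longrightarrow> strict_total_order_on A (rank_order A rk lvl)"
  unfolding strict_total_order_on_def rank_order_def irrefl_def trans_def
  by (auto simp: inj_on_def) (metis linorder_neqE_nat)

lemma strict_total_order_on_converse: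
  "strict_total_order_on A r \<Longrightarrow> strict_total_order_on A (r\<inverse>)"
  unfolding strict_total_order_on_def irrefl_def trans_def by blast

definition ballot_margin :: "'a rel \<Rightarrow> 'a \<Rightarrow> 'a \<Rightarrow> int" where
  "ballot_margin r a b = (if (a, b) \<in> r then 1 else 0) - (if (b, a) \<in> r then 1 else 0)"

lemma ballot_margin_converse: "ballot_margin (r\<inverse>) a b = - ballot_margin r a b"
  unfolding ballot_margin_def by auto

lemma card_filter_insert:
  assumes "finite M" "j \<notin> M"
  shows "card {i \<in> insert j M. Q i} = card {i \<in> M. Q i} + (if Q j then 1 else 0)"
proof -
  have "{i \<in> insert j M. Q i} = (if Q j then insert j {i \<in> M. Q i} else {i \<in> M. Q i})"
    by auto
  then show ?thesis using assms by simp
qed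

lemma margin_insert_voter:
  assumes "finite N" "i \<notin> N"
  shows "margin (insert i N) (R(i := r)) a b = margin N R a b + ballot_margin r a b"
proof -
  have "card {j \<in> insert i N. Q ((R(i := r)) j)} = card {j \<in> N. Q (R j)} + (if Q r then 1 else 0)"
    for Q :: "'a rel \<Rightarrow> bool"
  proof -
    have "{j \<in> N. Q ((R(i := r)) j)} = {j \<in> N. Q (R j)}"
      using assms(2) by auto
    then show ?thesis
      using card_filter_insert[OF assms, of "\<lambda>j. Q ((R(i := r)) j)"] by simp
  qed
  from this[of "\<lambda>r. (a, b) \<in> r"] this[of "\<lambda>r. (b, a) \<in> r"] show ?thesis
    unfolding margin_def ballot_margin_def by simp
qed

lemma is_profile_insert_voter:
  assumes "is_profile A N R" "i \<notin> N" "0 < i" "strict_total_order_on A r"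
  shows "is_profile A (insert i N) (R(i := r))"
  using assms unfolding is_profile_def by auto

lemma exists_fresh_voter: "finite (N :: nat set) \<Longrightarrow> \<exists>i. i \<notin> N \<and> 0 < i"
  using ex_new_if_finite[OF infinite_UNIV_nat, of "insert 0 N"] by auto

lemma exists_two_fresh_voters:
  assumes "is_profile A N R"
  obtains i j where
    "\<And>r r'. strict_total_order_on A r \<Longrightarrow> strict_total_order_on A r' \<Longrightarrow>
       is_profile A (insert i (insert j N)) (R(j := r', i := r))"
    "\<And>r r' a b. margin (insert i (insert j N)) (R(j := r', i := r)) a b
       = margin N R a b + ballot_margin r' a b + ballot_margin r a b"
proof -
  have "finite N" using assms unfolding is_profile_def by blast
  obtain j where j: "j \<notin> N" "0 < j" using exists_fresh_voter[OF \<open>finite N\<close>] by blast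
  obtain i where i: "i \<notin> insert j N" "0 < i"
    using exists_fresh_voter[of "insert j N"] \<open>finite N\<close> by blast
  show thesis
  proof (rule that)
    show "is_profile A (insert i (insert j N)) (R(j := r', i := r))"
      if "strict_total_order_on A r" "strict_total_order_on A r'" for r r'
      using is_profile_insert_voter[OF is_profile_insert_voter[OF assms j that(2)] i that(1)] .
    show "margin (insert i (insert j N)) (R(j := r', i := r)) a b
       = margin N R a b + ballot_margin r' a b + ballot_margin r a b" for r r' a b
      using \<open>finite N\<close> i j by (simp add: margin_insert_voter)
  qed
qed

text \<open>The effect on the margins of lifting every alternative of T over z in one ballot.\<close>

definition overtake_shift :: "'a set \<Rightarrow> 'a \<Rightarrow> 'a \<Rightarrow> 'a \<Rightarrow> int" where
  "overtake_shift T z a b = (if a \<in> T \<and> b = z then 2 else if a = z \<and> b \<in> T then -2 else 0)"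

text \<open>Levels from the top: S, X - S, T - X, z, the rest (every use assumes z \<notin> T).\<close>

definition tier :: "'a set \<Rightarrow> 'a set \<Rightarrow> 'a set \<Rightarrow> 'a \<Rightarrow> 'a \<Rightarrow> nat" where
  "tier S X T z a =
     (if a \<in> S then 0 else if a \<in> X then 1 else if a = z then 3 else if a \<in> T then 2 else 4)"

definition tier_z_first :: "'a set \<Rightarrow> 'a set \<Rightarrow> 'a set \<Rightarrow> 'a \<Rightarrow> 'a \<Rightarrow> nat" where
  "tier_z_first S X T z a = (if a = z then 0 else Suc (tier S X T z a))"

lemma ballot_margin_lower_z:
  assumes "S \<subseteq> X" "X \<subseteq> T" "T \<subseteq> A" "z \<in> A" "z \<notin> T"
  shows "ballot_margin (rank_order A rk (tier S X T z)) a b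
           - ballot_margin (rank_order A rk (tier_z_first S X T z)) a b = overtake_shift T z a b"
  using assms unfolding ballot_margin_def rank_order_def tier_def tier_z_first_def overtake_shift_def
  by (auto split: if_splits)

lemma fishburn_tier_ballot:
  assumes "X \<noteq> Y" "X \<subseteq> A" "Y \<subseteq> A"
  shows "fishburn (rank_order A rk (tier (X - Y) X T z)) X Y"
  using assms unfolding fishburn_def rank_order_def tier_def by auto

lemma choice_invariant_under_overtaking:
  assumes "finite A" "scc A f" "pairwise_scc A f" "strategyproof A f"
    and R: "is_profile A N R"
    and T: "f N R \<subseteq> T" "T \<subseteq> A" and z: "z \<in> A" "z \<notin> T"
  shows "\<exists>N' R'. is_profile A N' R' \<and> f N' R' = f N R \<and>
           (\<forall>a b. margin N' R' a b = margin N R a b + overtake_shift T z a b)"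
proof -
  define X where "X = f N R"
  obtain rk :: "'a \<Rightarrow> nat" where rk: "inj_on rk A"
    using finite_imp_inj_to_nat_seg[OF \<open>finite A\<close>] by blast
  define lead where "lead S = rank_order A rk (tier_z_first S X T z)" for S
  define sincere where "sincere S = rank_order A rk (tier S X T z)" for S
  obtain i j where profile: "\<And>r r'. strict_total_order_on A r \<Longrightarrow> strict_total_order_on A r' \<Longrightarrow>
       is_profile A (insert i (insert j N)) (R(j := r', i := r))"
    and margin: "\<And>r r' a b. margin (insert i (insert j N)) (R(j := r', i := r)) a b
       = margin N R a b + ballot_margin r' a b + ballot_margin r a b"
    using exists_two_fresh_voters[OF R] by metis
  define N' where "N' = insert i (insert j N)"
  define Rl where "Rl S = R(j := (lead S)\<inverse>, i := lead S)" for S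
  define Rs where "Rs S = R(j := (lead S)\<inverse>, i := sincere S)" for S
  have orders: "strict_total_order_on A (lead S)" "strict_total_order_on A ((lead S)\<inverse>)"
    "strict_total_order_on A (sincere S)" for S
    using rk unfolding lead_def sincere_def
    by (simp_all add: strict_total_order_on_rank_order strict_total_order_on_converse)
  have profile_lead: "is_profile A N' (Rl S)" and profile_sincere: "is_profile A N' (Rs S)" for S
    unfolding N'_def Rl_def Rs_def using profile orders by blast+
  have margin_lead: "margin N' (Rl S) a b = margin N R a b" for S a b
    unfolding N'_def Rl_def margin ballot_margin_converse by simp
  have margin_sincere: "margin N' (Rs S) a b = margin N R a b + overtake_shift T z a b"
    if "S \<subseteq> X" for S a b
  proof -
    have "X \<subseteq> T" using T X_def by blast
    from ballot_margin_lower_z[OF that this T(2) z, of rk a b] show ?thesis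
      unfolding N'_def Rs_def margin ballot_margin_converse lead_def sincere_def by simp
  qed
  define Y where "Y = f N' (Rs {})"
  have f_sincere: "f N' (Rs (X - Y)) = Y"
    using \<open>pairwise_scc A f\<close> profile_sincere margin_sincere[of "X - Y"] margin_sincere[of "{}"]
    unfolding pairwise_scc_def Y_def by auto
  have f_lead: "f N' (Rl (X - Y)) = X"
    using \<open>pairwise_scc A f\<close> profile_lead R margin_lead
    unfolding pairwise_scc_def X_def by blast
  have "\<forall>k. k \<noteq> i \<longrightarrow> Rl (X - Y) k = Rs (X - Y) k" "i \<in> N'"
    unfolding Rs_def Rl_def N'_def by simp_all
  then have "\<not> fishburn (Rs (X - Y) i) (f N' (Rl (X - Y))) (f N' (Rs (X - Y)))"
    using \<open>strategyproof A f\<close> profile_sincere profile_lead unfolding strategyproof_def by blast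
  then have "\<not> fishburn (sincere (X - Y)) X Y"
    using f_sincere f_lead by (simp add: Rs_def)
  moreover have "X \<subseteq> A" "Y \<subseteq> A"
    using \<open>scc A f\<close> R profile_sincere unfolding scc_def X_def Y_def by auto
  ultimately have "X = Y"
    using fishburn_tier_ballot[of X Y A rk T z] unfolding sincere_def by blast
  then show ?thesis
    using profile_sincere margin_sincere[of "{}"] unfolding X_def Y_def by blast
qed

definition cos_violation ::
    "'a set \<Rightarrow> (nat set \<Rightarrow> (nat \<Rightarrow> 'a rel) \<Rightarrow> 'a set) \<Rightarrow> nat set \<Rightarrow> (nat \<Rightarrow> 'a rel) \<Rightarrow> 'a \<Rightarrow> bool"
  where "cos_violation A f N R x \<longleftrightarrow>
           x \<in> A \<and> f N R - {x} \<noteq> {} \<and> (\<forall>y\<in>f N R - {x}. margin N R x y > 0)"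

definition condorcet_deficit :: "'a set \<Rightarrow> nat set \<Rightarrow> (nat \<Rightarrow> 'a rel) \<Rightarrow> 'a \<Rightarrow> nat" where
  "condorcet_deficit A N R x = (\<Sum>w\<in>A - {x}. nat (1 - margin N R x w))"

lemma cos_violation_descent:
  assumes "finite A" "scc A f" "pairwise_scc A f" "strategyproof A f"
    "strongly_condorcet_consistent A f"
    and R: "is_profile A N R" and viol: "cos_violation A f N R x"
  shows "\<exists>N' R'. is_profile A N' R' \<and> cos_violation A f N' R' x \<and>
           condorcet_deficit A N' R' x < condorcet_deficit A N R x"
proof -
  have x: "x \<in> A" using viol unfolding cos_violation_def by blast
  have "\<not> condorcet_winner A N R x"
    using \<open>strongly_condorcet_consistent A f\<close> R viol
    unfolding strongly_condorcet_consistent_def cos_violation_def by auto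
  then obtain z where z: "z \<in> A" "z \<noteq> x" "margin N R x z \<le> 0"
    using x unfolding condorcet_winner_def by (auto simp: not_less)
  have z_outside: "z \<notin> insert x (f N R)"
    using viol z unfolding cos_violation_def by force
  have "insert x (f N R) \<subseteq> A"
    using \<open>scc A f\<close> R x unfolding scc_def by blast
  then obtain N' R' where R': "is_profile A N' R'" "f N' R' = f N R"
    and shift: "\<And>a b. margin N' R' a b = margin N R a b + overtake_shift (insert x (f N R)) z a b"
    using choice_invariant_under_overtaking[OF assms(1-4) R subset_insertI _ z(1) z_outside]
    by blast
  have margin_x: "margin N' R' x w = margin N R x w + (if w = z then 2 else 0)" for w
    using shift z(2) unfolding overtake_shift_def by auto
  have "cos_violation A f N' R' x"
    using viol R'(2) margin_x unfolding cos_violation_def by (simp add: add_pos_nonneg)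
  moreover have "condorcet_deficit A N' R' x < condorcet_deficit A N R x"
    unfolding condorcet_deficit_def
  proof (rule sum_strict_mono_ex1)
    show "finite (A - {x})" using \<open>finite A\<close> by simp
    show "\<forall>w\<in>A - {x}. nat (1 - margin N' R' x w) \<le> nat (1 - margin N R x w)"
      using margin_x by (auto simp: nat_mono)
    show "\<exists>w\<in>A - {x}. nat (1 - margin N' R' x w) < nat (1 - margin N R x w)"
      using margin_x z by (intro bexI[of _ z]) auto
  qed
  ultimately show ?thesis using R' by blast
qed

theorem lemma5:
  fixes A :: "'a set" and f :: "nat set \<Rightarrow> (nat \<Rightarrow> 'a rel) \<Rightarrow> 'a set"
  assumes "finite A"
    and "scc A f"
    and "pairwise_scc A f"
    and "strategyproof A f"
    and "strongly_condorcet_consistent A f"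
  shows "COS A f"
proof -
  have "\<not> cos_violation A f N R x" if "is_profile A N R" for N R x
    using that
  proof (induction "condorcet_deficit A N R x" arbitrary: N R rule: less_induct)
    case less
    then show ?case
      using cos_violation_descent[OF assms] by blast
  qed
  then show ?thesis
    unfolding COS_def cos_violation_def by blast
qed

end
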